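(* Let $S$ be an $E$-demigroup. If the constellation $C^d_E(S)$ is inductive, then $E$ is right pre-reduced and: (I1) for all $t\in S$ and $e\in E$ there is $t\cdot e\in E$ such that for all $s\in S$: ($ste=st$ and $sd(t)=s$) if and only if $s(t\cdot e)=s$; and (I2) $(E,\le_r)$ is a meet-semilattice, and for all $s\in S$ and $e,f\in E$, $se=sf=s$ implies $s(e\wedge f)=s$, where $\wedge$ is the meet in $(E,\le_r)$. That is, $S$ is an inductive $E$-demigroup.
   Context: For a semigroup $S$, $E(S)$ is its set of idempotents; for $e,f\in E(S)$, $e\le_r f$ iff $e=ef$. $E\subseteq E(S)$ is right pre-reduced if $e=ef$ and $f=fe$ imply $e=f$ for $e,f\in E$. A demigroup is a semigroup $S$ with a unary operation $d$ such that for all $x,y\in S$: $d(x)\in E(S)$, $d(x)x=x$ and $d(xy)=d(xd(y))$. For $E\subseteq E(S)$, $S$ is an $E$-demigroup if $d(s)\in E$ for all $s\in S$ and $ed(e)=e$ for all $e\in E$. An $E$-demigroup is inductive if $E$ is right pre-reduced and there is a function $\cdot:S\times E\to E$ satisfying (I1) and (I2). $C_E(S)=\{(e,s)\in E\times S\mid es=s\}$ with partial product $(e,s)\circ(f,t)=(e,st)$ defined exactly when $sf=s$, and $D((e,s))=(e,e)$; $C^d_E(S)=\{(e,s)\in C_E(S)\mid d(e)=d(s)\}$ with the restricted operations. This is a constellation: a set $P$ with partial binary $\circ$ and unary $D$ such that (C1) if $x\circ(y\circ z)$ exists then so does $(x\circ y)\circ z$ and they are equal; (C2) if $x\circ y$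 and $y\circ z$ exist then $x\circ(y\circ z)$ exists; (C3) $D(x)$ is the unique right identity $e$ (i.e. $a\circ e=a$ whenever defined) with $e\circ x=x$. The natural quasiorder on $P$: $s\le t$ iff $D(s)\circ t$ exists and equals $s$; $P$ is normal if this is a partial order. $P$ is inductive if it is normal and (O4) for all $e\in D(P)=\{D(x)\mid x\in P\}$ and $a\in P$ there is a largest $x\in P$ (in the natural order) with $x\le a$ and $x\circ e$ defined, denoted $a|e$; and (O5) for $x,y\in P$, $e\in D(P)$, if $x\circ y$ exists then $D((x\circ y)|e)=D(x|D(y|e))$. *)

theory Defs
  imports Main
begin

text \<open>The semigroup S is the whole carrier type 'a of class semigroup_mult.\<close>

definition idem :: "'a::semigroup_mult \<Rightarrow> bool" where
  "idem x \<longleftrightarrow> x * x = x"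

definition demigroup :: "('a::semigroup_mult \<Rightarrow> 'a) \<Rightarrow> bool" where
  "demigroup d \<longleftrightarrow> (\<forall>x y. idem (d x) \<and> d x * x = x \<and> d (x * y) = d (x * d y))"

definition E_demigroup :: "('a::semigroup_mult \<Rightarrow> 'a) \<Rightarrow> 'a set \<Rightarrow> bool" where
  "E_demigroup d E \<longleftrightarrow> demigroup d \<and> E \<subseteq> {e. idem e}
     \<and> (\<forall>s. d s \<in> E) \<and> (\<forall>e\<in>E. e * d e = e)"

definition right_pre_reduced :: "'a::semigroup_mult set \<Rightarrow> bool" where
  "right_pre_reduced E \<longleftrightarrow> (\<forall>e\<in>E. \<forall>f\<in>E. e = e * f \<and> f = f * e \<longrightarrow> e = f)"

definition leq_r :: "'a::semigroup_mult \<Rightarrow> 'a \<Rightarrow> bool" where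
  "leq_r e f \<longleftrightarrow> e = e * f"

definition cond_I1 :: "('a::semigroup_mult \<Rightarrow> 'a) \<Rightarrow> 'a set \<Rightarrow> ('a \<Rightarrow> 'a \<Rightarrow> 'a) \<Rightarrow> bool" where
  "cond_I1 d E dot \<longleftrightarrow> (\<forall>t e. e \<in> E \<longrightarrow> dot t e \<in> E \<and>
     (\<forall>s. (s * t * e = s * t \<and> s * d t = s) \<longleftrightarrow> s * dot t e = s))"

definition is_meet_r :: "'a::semigroup_mult set \<Rightarrow> 'a \<Rightarrow> 'a \<Rightarrow> 'a \<Rightarrow> bool" where
  "is_meet_r E e f m \<longleftrightarrow> m \<in> E \<and> leq_r m e \<and> leq_r m f
     \<and> (\<forall>g\<in>E. leq_r g e \<and> leq_r g f \<longrightarrow> leq_r g m)"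

definition meet_semilattice_r :: "'a::semigroup_mult set \<Rightarrow> bool" where
  "meet_semilattice_r E \<longleftrightarrow>
     (\<forall>e\<in>E. leq_r e e)
   \<and> (\<forall>e\<in>E. \<forall>f\<in>E. \<forall>g\<in>E. leq_r e f \<and> leq_r f g \<longrightarrow> leq_r e g)
   \<and> (\<forall>e\<in>E. \<forall>f\<in>E. leq_r e f \<and> leq_r f e \<longrightarrow> e = f)
   \<and> (\<forall>e\<in>E. \<forall>f\<in>E. \<exists>m. is_meet_r E e f m)"

definition cond_I2 :: "'a::semigroup_mult set \<Rightarrow> bool" where
  "cond_I2 E \<longleftrightarrow> meet_semilattice_r E \<and>
     (\<forall>s e f m. e \<in> E \<and> f \<in> E \<and> is_meet_r E e f m \<and> s * e = s \<and> s * f = s \<longrightarrow> s * m = s)"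

definition nat_le :: "'p set \<Rightarrow> ('p \<Rightarrow> 'p \<Rightarrow> 'p option) \<Rightarrow> ('p \<Rightarrow> 'p) \<Rightarrow> 'p \<Rightarrow> 'p \<Rightarrow> bool" where
  "nat_le P cmp D s t \<longleftrightarrow> cmp (D s) t = Some s"

definition normal_constellation :: "'p set \<Rightarrow> ('p \<Rightarrow> 'p \<Rightarrow> 'p option) \<Rightarrow> ('p \<Rightarrow> 'p) \<Rightarrow> bool" where
  "normal_constellation P cmp D \<longleftrightarrow>
     (\<forall>x\<in>P. nat_le P cmp D x x)
   \<and> (\<forall>x\<in>P. \<forall>y\<in>P. \<forall>z\<in>P. nat_le P cmp D x y \<and> nat_le P cmp D y z \<longrightarrow> nat_le P cmp D x z)
   \<and> (\<forall>x\<in>P. \<forall>y\<in>P. nat_le P cmp D x y \<and> nat_le P cmp D y x \<longrightarrow> x = y)"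

definition is_restr :: "'p set \<Rightarrow> ('p \<Rightarrow> 'p \<Rightarrow> 'p option) \<Rightarrow> ('p \<Rightarrow> 'p) \<Rightarrow> 'p \<Rightarrow> 'p \<Rightarrow> 'p \<Rightarrow> bool" where
  "is_restr P cmp D a e x \<longleftrightarrow> x \<in> P \<and> nat_le P cmp D x a \<and> cmp x e \<noteq> None
     \<and> (\<forall>y\<in>P. nat_le P cmp D y a \<and> cmp y e \<noteq> None \<longrightarrow> nat_le P cmp D y x)"

definition restr :: "'p set \<Rightarrow> ('p \<Rightarrow> 'p \<Rightarrow> 'p option) \<Rightarrow> ('p \<Rightarrow> 'p) \<Rightarrow> 'p \<Rightarrow> 'p \<Rightarrow> 'p" where
  "restr P cmp D a e = (THE x. is_restr P cmp D a e x)"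

definition inductive_constellation :: "'p set \<Rightarrow> ('p \<Rightarrow> 'p \<Rightarrow> 'p option) \<Rightarrow> ('p \<Rightarrow> 'p) \<Rightarrow> bool" where
  "inductive_constellation P cmp D \<longleftrightarrow> normal_constellation P cmp D
   \<and> (\<forall>e\<in>D ` P. \<forall>a\<in>P. \<exists>x. is_restr P cmp D a e x)
   \<and> (\<forall>x\<in>P. \<forall>y\<in>P. \<forall>e\<in>D ` P. \<forall>xy. cmp x y = Some xy \<longrightarrow>
        D (restr P cmp D xy e) = D (restr P cmp D x (D (restr P cmp D y e))))"

definition CdE :: "('a::semigroup_mult \<Rightarrow> 'a) \<Rightarrow> 'a set \<Rightarrow> ('a \<times> 'a) set" where
  "CdE d E = {(e, s). e \<in> E \<and> e * s = s \<and> d e = d s}"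

definition C_comp :: "('a::semigroup_mult \<times> 'a) \<Rightarrow> ('a \<times> 'a) \<Rightarrow> ('a \<times> 'a) option" where
  "C_comp x y = (case x of (e, s) \<Rightarrow> case y of (f, t) \<Rightarrow>
       if s * f = s then Some (e, s * t) else None)"

definition C_D :: "('a::semigroup_mult \<times> 'a) \<Rightarrow> ('a \<times> 'a)" where
  "C_D x = (fst x, fst x)"

end

theory Submission
  imports Defs
begin

text \<open>On diagonal pairs the natural order of \<open>C\<^sup>d\<^sub>E(S)\<close> reads \<open>(e, e) \<le> (f, f) \<longleftrightarrow> e = e f\<close>,
  so its antisymmetry says that \<open>E\<close> is right pre-reduced. Restrictions produce the required
  idempotents: \<open>t \<cdot> e\<close> is the first component of \<open>(d t, t) | (e, e)\<close> and \<open>e \<and> f\<close> that of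
  \<open>(e, e) | (f, f)\<close>. The pair \<open>(d s, s)\<close> keeps its first component under restriction to
  \<open>(g, g)\<close> exactly when \<open>s g = s\<close>; applying (O5) to the product \<open>(d s, s) \<circ> y\<close> therefore
  turns a hypothesis on \<open>s\<close> into \<open>s h = s\<close> for the first component \<open>h\<close> of \<open>y | (g, g)\<close>,
  which gives the implications from right to left in (I1) and (I2).\<close>

lemma normal_constellation_nat_le_antisym:
  assumes "normal_constellation P cmp D" "x \<in> P" "y \<in> P"
    and "nat_le P cmp D x y" "nat_le P cmp D y x"
  shows "x = y"
  using assms unfolding normal_constellation_def by blast

lemma is_restr_restr:
  assumes ic: "inductive_constellation P cmp D" and "a \<in> P" "e \<in> D ` P"
  shows "is_restr P cmp D a e (restr P cmp D a e)"
proof -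
  have nc: "normal_constellation P cmp D"
    using ic by (simp add: inductive_constellation_def)
  obtain x where x: "is_restr P cmp D a e x"
    using ic assms(2,3) unfolding inductive_constellation_def by blast
  have "y = x" if "is_restr P cmp D a e y" for y
    using normal_constellation_nat_le_antisym[OF nc] x that unfolding is_restr_def by blast
  then have "\<exists>!x. is_restr P cmp D a e x"
    using x by blast
  then show ?thesis
    unfolding restr_def by (rule theI')
qed

lemma restr_eq_self:
  assumes ic: "inductive_constellation P cmp D" and a: "a \<in> P" and "e \<in> D ` P"
    and "cmp a e \<noteq> None"
  shows "restr P cmp D a e = a"
proof -
  have nc: "normal_constellation P cmp D"
    using ic by (simp add: inductive_constellation_def)
  note r = is_restr_restr[OF ic a \<open>e \<in> D ` P\<close>]
  have "nat_le P cmp D a a"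
    using nc a by (simp add: normal_constellation_def)
  then have "nat_le P cmp D a (restr P cmp D a e)"
    using r a \<open>cmp a e \<noteq> None\<close> by (simp add: is_restr_def)
  then show ?thesis
    using normal_constellation_nat_le_antisym[OF nc] r a unfolding is_restr_def by blast
qed

lemma inductive_constellation_restr_comp:
  assumes "inductive_constellation P cmp D" "x \<in> P" "y \<in> P" "e \<in> D ` P"
    and "cmp x y = Some xy"
  shows "D (restr P cmp D xy e) = D (restr P cmp D x (D (restr P cmp D y e)))"
  using assms unfolding inductive_constellation_def by blast

lemma demigroup_d_mult_self: "demigroup d \<Longrightarrow> d x * x = x"
  by (simp add: demigroup_def)

lemma demigroup_d_d: "demigroup d \<Longrightarrow> d (d x) = d x"
  by (metis demigroup_def idem_def)

lemma demigroup_d_mult_cong: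
  assumes "demigroup d" "d u = d v"
  shows "d (s * u) = d (s * v)"
  using assms unfolding demigroup_def by metis

lemma leq_r_trans: "leq_r e f \<Longrightarrow> leq_r f g \<Longrightarrow> leq_r e g"
  unfolding leq_r_def by (metis mult.assoc)

lemma mem_CdE_iff: "(e, s) \<in> CdE d E \<longleftrightarrow> e \<in> E \<and> e * s = s \<and> d e = d s"
  by (simp add: CdE_def)

lemma nat_le_C_comp_iff:
  "nat_le P C_comp C_D (e, s) (f, t) \<longleftrightarrow> e * f = e \<and> s = e * t"
  by (auto simp: nat_le_def C_comp_def C_D_def)

lemma C_comp_eq_Some: "s * f = s \<Longrightarrow> C_comp (e, s) (f, t) = Some (e, s * t)"
  by (simp add: C_comp_def)

lemma diag_mem_CdE: "E_demigroup d E \<Longrightarrow> e \<in> E \<Longrightarrow> (e, e) \<in> CdE d E"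
  by (auto simp: E_demigroup_def idem_def CdE_def)

lemma diag_mem_C_D_image: "E_demigroup d E \<Longrightarrow> e \<in> E \<Longrightarrow> (e, e) \<in> C_D ` CdE d E"
  by (rule image_eqI[where x = "(e, e)"]) (auto simp: C_D_def diag_mem_CdE)

lemma d_pair_mem_CdE: "E_demigroup d E \<Longrightarrow> (d s, s) \<in> CdE d E"
  by (auto simp: E_demigroup_def CdE_def demigroup_d_mult_self demigroup_d_d)

lemma C_D_eq_diag_fst: "C_D x = (fst x, fst x)"
  by (simp add: C_D_def)

context
  fixes d :: "'a::semigroup_mult \<Rightarrow> 'a" and E :: "'a set"
  assumes ed: "E_demigroup d E"
    and ic: "inductive_constellation (CdE d E) C_comp C_D"
begin

abbreviation restr_CdE :: "'a \<times> 'a \<Rightarrow> 'a \<times> 'a \<Rightarrow> 'a \<times> 'a" where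
  "restr_CdE \<equiv> restr (CdE d E) C_comp C_D"

lemma is_restr_CdE_diag:
  assumes "y \<in> CdE d E" "g \<in> E"
  shows "is_restr (CdE d E) C_comp C_D y (g, g) (restr_CdE y (g, g))"
  using is_restr_restr[OF ic assms(1) diag_mem_C_D_image[OF ed assms(2)]] .

lemma restr_CdE_diag_eq:
  assumes "(f, t) \<in> CdE d E" "g \<in> E" and r: "restr_CdE (f, t) (g, g) = (h, u)"
  shows "h \<in> E" "h * f = h" "u = h * t" "u * g = u"
proof -
  have "(h, u) \<in> CdE d E" "nat_le (CdE d E) C_comp C_D (h, u) (f, t)"
    "C_comp (h, u) (g, g) \<noteq> None"
    using is_restr_CdE_diag[OF assms(1,2)] unfolding r is_restr_def by blast+
  then show "h \<in> E" "h * f = h" "u = h * t" "u * g = u"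
    by (simp_all add: mem_CdE_iff nat_le_C_comp_iff C_comp_def split: if_splits)
qed

lemma mult_eq_if_fst_restr_d_pair_eq:
  assumes "g \<in> E" "fst (restr_CdE (d s, s) (g, g)) = d s"
  shows "s * g = s"
proof -
  obtain h u where r: "restr_CdE (d s, s) (g, g) = (h, u)"
    by fastforce
  note props = restr_CdE_diag_eq[OF d_pair_mem_CdE[OF ed] \<open>g \<in> E\<close> r]
  have "h = d s"
    using assms(2) r by simp
  then show ?thesis
    using props ed by (simp add: E_demigroup_def demigroup_d_mult_self)
qed

lemma mult_fst_restr_CdE_eq:
  assumes y: "(f, t) \<in> CdE d E" and g: "g \<in> E"
    and sf: "s * f = s" and stg: "s * t * g = s * t"
  shows "s * fst (restr_CdE (f, t) (g, g)) = s"
proof -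
  have dm: "demigroup d"
    using ed by (simp add: E_demigroup_def)
  have "d (s * t) = d (s * f)"
    using y by (intro demigroup_d_mult_cong[OF dm]) (simp add: mem_CdE_iff)
  then have "(d s, s * t) \<in> CdE d E"
    using ed sf by (simp add: mem_CdE_iff E_demigroup_def demigroup_d_d demigroup_d_mult_self
        mult.assoc[symmetric])
  then have "restr_CdE (d s, s * t) (g, g) = (d s, s * t)"
    using restr_eq_self[OF ic _ diag_mem_C_D_image[OF ed g]] stg
    by (simp add: C_comp_def)
  moreover have "C_comp (d s, s) (f, t) = Some (d s, s * t)"
    using sf by (rule C_comp_eq_Some)
  ultimately have "fst (restr_CdE (d s, s) (C_D (restr_CdE (f, t) (g, g)))) = d s"
    using inductive_constellation_restr_comp[OF ic d_pair_mem_CdE[OF ed, of s] y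
        diag_mem_C_D_image[OF ed g]]
    by (simp add: C_D_eq_diag_fst)
  moreover have "fst (restr_CdE (f, t) (g, g)) \<in> E"
    using restr_CdE_diag_eq(1)[OF y g] by (metis prod.collapse)
  ultimately show ?thesis
    using mult_eq_if_fst_restr_d_pair_eq by (simp add: C_D_eq_diag_fst)
qed

lemma right_pre_reduced_if_inductive: "right_pre_reduced E"
  unfolding right_pre_reduced_def
proof (intro ballI impI)
  fix e f assume e: "e \<in> E" and f: "f \<in> E" and ef: "e = e * f \<and> f = f * e"
  have "normal_constellation (CdE d E) C_comp C_D"
    using ic by (simp add: inductive_constellation_def)
  then have "(e, e) = (f, f)"
    using normal_constellation_nat_le_antisym diag_mem_CdE[OF ed e] diag_mem_CdE[OF ed f] ef
    by (metis nat_le_C_comp_iff)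
  then show "e = f"
    by simp
qed

lemma cond_I1_if_inductive: "cond_I1 d E (\<lambda>t e. fst (restr_CdE (d t, t) (e, e)))"
  unfolding cond_I1_def
proof (intro allI impI conjI)
  fix t e assume e: "e \<in> E"
  obtain f u where r: "restr_CdE (d t, t) (e, e) = (f, u)"
    by fastforce
  note props = restr_CdE_diag_eq[OF d_pair_mem_CdE[OF ed] e r]
  show "fst (restr_CdE (d t, t) (e, e)) \<in> E"
    using props r by simp
  fix s
  show "(s * t * e = s * t \<and> s * d t = s) \<longleftrightarrow> s * fst (restr_CdE (d t, t) (e, e)) = s"
  proof
    assume "s * t * e = s * t \<and> s * d t = s"
    then show "s * fst (restr_CdE (d t, t) (e, e)) = s"
      using mult_fst_restr_CdE_eq[OF d_pair_mem_CdE[OF ed] e] by blast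
  next
    assume "s * fst (restr_CdE (d t, t) (e, e)) = s"
    then have sf: "s * f = s"
      using r by simp
    then have "s * d t = s"
      using props(2) by (metis mult.assoc)
    moreover have "s * t * e = s * t"
      using sf props(3,4) by (metis mult.assoc)
    ultimately show "s * t * e = s * t \<and> s * d t = s"
      by blast
  qed
qed

lemma is_meet_r_fst_restr_CdE:
  assumes e: "e \<in> E" and f: "f \<in> E"
  shows "is_meet_r E e f (fst (restr_CdE (e, e) (f, f)))"
proof -
  obtain g u where r: "restr_CdE (e, e) (f, f) = (g, u)"
    by fastforce
  note props = restr_CdE_diag_eq[OF diag_mem_CdE[OF ed e] f r]
  have "is_meet_r E e f g"
    unfolding is_meet_r_def leq_r_def
  proof (intro conjI ballI impI)
    show "g \<in> E" "g = g * e" "g = g * f"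
      using props by simp_all
    fix h assume h: "h \<in> E" and hh: "h = h * e \<and> h = h * f"
    then have "nat_le (CdE d E) C_comp C_D (h, h) (e, e)" "C_comp (h, h) (f, f) \<noteq> None"
      by (simp_all add: nat_le_C_comp_iff C_comp_def)
    then have "nat_le (CdE d E) C_comp C_D (h, h) (g, u)"
      using is_restr_CdE_diag[OF diag_mem_CdE[OF ed e] f] diag_mem_CdE[OF ed h]
      unfolding r is_restr_def by blast
    then show "h = h * g"
      by (simp add: nat_le_C_comp_iff)
  qed
  then show ?thesis
    using r by simp
qed

lemma is_meet_r_unique:
  "is_meet_r E e f m \<Longrightarrow> is_meet_r E e f m' \<Longrightarrow> m = m'"
  using right_pre_reduced_if_inductive
  unfolding is_meet_r_def right_pre_reduced_def leq_r_def by blast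

lemma cond_I2_if_inductive: "cond_I2 E"
  unfolding cond_I2_def meet_semilattice_r_def
proof (intro conjI ballI impI allI)
  fix e assume "e \<in> E"
  then show "leq_r e e"
    using ed by (auto simp: E_demigroup_def idem_def leq_r_def)
next
  fix e f g assume "e \<in> E" "f \<in> E" "g \<in> E" "leq_r e f \<and> leq_r f g"
  then show "leq_r e g"
    using leq_r_trans by blast
next
  fix e f assume "e \<in> E" "f \<in> E" "leq_r e f \<and> leq_r f e"
  then show "e = f"
    using right_pre_reduced_if_inductive unfolding right_pre_reduced_def leq_r_def by blast
next
  fix e f assume "e \<in> E" "f \<in> E"
  then show "\<exists>m. is_meet_r E e f m"
    using is_meet_r_fst_restr_CdE by blast
next
  fix s e f m assume h: "e \<in> E \<and> f \<in> E \<and> is_meet_r E e f m \<and> s * e = s \<and> s * f = s"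
  then have "m = fst (restr_CdE (e, e) (f, f))"
    using is_meet_r_unique is_meet_r_fst_restr_CdE by blast
  moreover have "s * fst (restr_CdE (e, e) (f, f)) = s"
    using h by (simp add: mult_fst_restr_CdE_eq diag_mem_CdE[OF ed])
  ultimately show "s * m = s"
    by simp
qed

end

theorem proposition3p5:
  fixes d :: "'a::semigroup_mult \<Rightarrow> 'a" and E :: "'a set"
  assumes "E_demigroup d E"
    and "inductive_constellation (CdE d E) C_comp C_D"
  shows "right_pre_reduced E \<and> (\<exists>dot. cond_I1 d E dot) \<and> cond_I2 E"
  using right_pre_reduced_if_inductive[OF assms] cond_I1_if_inductive[OF assms]
    cond_I2_if_inductive[OF assms] by (intro conjI exI)

end
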